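(* Let $P\in\mathbb{R}^{p_1\times q_1}_+$, $Q\in\mathbb{R}^{p_2\times q_1}_+$, $R\in\mathbb{R}^{p_2\times q_2}_+$ be nonnegative matrices and let \[ M=\begin{bmatrix} P & 0\\ Q & R\end{bmatrix}\in\mathbb{R}^{(p_1+p_2)\times(q_1+q_2)}_+. \] Then $\operatorname{rank}_{\mathrm{psd}}(M)\ge\operatorname{rank}_{\mathrm{psd}}(P)+\operatorname{rank}_{\mathrm{psd}}(R)$. Moreover, if $Q=0$ then equality holds.
   Context: $\mathcal{S}^k_+$ denotes the cone of $k\times k$ real symmetric positive semidefinite matrices, with inner product $\langle A,B\rangle = \operatorname{trace}(AB)$. A psd factorization of size $k$ of a nonnegative matrix $M\in\mathbb{R}^{p\times q}_+$ is a collection $A_1,\dots,A_p, B_1,\dots,B_q \in \mathcal{S}^k_+$ with $M_{ij} = \langle A_i, B_j\rangle$ for all $i,j$; the psd rank $\operatorname{rank}_{\mathrm{psd}}(M)$ is the smallest $k$ for which such a factorization exists. *)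

theory Defs
  imports Main Complex_Main
begin

text \<open>Matrices of varying size are represented as functions nat => nat => real,
  with the relevant entries being those with indices below the stated dimensions.\<close>

definition psd_mat :: "nat \<Rightarrow> (nat \<Rightarrow> nat \<Rightarrow> real) \<Rightarrow> bool" where
  "psd_mat k A \<longleftrightarrow>
     (\<forall>i<k. \<forall>j<k. A i j = A j i) \<and>
     (\<forall>x :: nat \<Rightarrow> real. 0 \<le> (\<Sum>i<k. \<Sum>j<k. x i * A i j * x j))"

definition trace_inner :: "nat \<Rightarrow> (nat \<Rightarrow> nat \<Rightarrow> real) \<Rightarrow> (nat \<Rightarrow> nat \<Rightarrow> real) \<Rightarrow> real" where
  "trace_inner k A B = (\<Sum>i<k. \<Sum>j<k. A i j * B j i)"

definition nonneg_mat :: "nat \<Rightarrow> nat \<Rightarrow> (nat \<Rightarrow> nat \<Rightarrow> real) \<Rightarrow> bool" where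
  "nonneg_mat p q M \<longleftrightarrow> (\<forall>i<p. \<forall>j<q. 0 \<le> M i j)"

definition has_psd_factorization ::
  "nat \<Rightarrow> nat \<Rightarrow> (nat \<Rightarrow> nat \<Rightarrow> real) \<Rightarrow> nat \<Rightarrow> bool" where
  "has_psd_factorization p q M k \<longleftrightarrow>
     (\<exists>A B :: nat \<Rightarrow> nat \<Rightarrow> nat \<Rightarrow> real.
        (\<forall>i<p. psd_mat k (A i)) \<and> (\<forall>j<q. psd_mat k (B j)) \<and>
        (\<forall>i<p. \<forall>j<q. M i j = trace_inner k (A i) (B j)))"

definition psd_rank :: "nat \<Rightarrow> nat \<Rightarrow> (nat \<Rightarrow> nat \<Rightarrow> real) \<Rightarrow> nat" where
  "psd_rank p q M = (LEAST k. has_psd_factorization p q M k)"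

definition block_mat ::
  "nat \<Rightarrow> nat \<Rightarrow> (nat \<Rightarrow> nat \<Rightarrow> real) \<Rightarrow> (nat \<Rightarrow> nat \<Rightarrow> real) \<Rightarrow> (nat \<Rightarrow> nat \<Rightarrow> real)
   \<Rightarrow> nat \<Rightarrow> nat \<Rightarrow> real" where
  "block_mat p1 q1 P Q R i j =
     (if i < p1 then (if j < q1 then P i j else 0)
      else (if j < q1 then Q (i - p1) j else R (i - p1) (j - q1)))"

end

theory Submission
  imports Defs
begin

(*
  Upper bound (Q = 0): the direct sum of a size-d1 factorization of P and a size-d2
  factorization of R is a factorization of the block matrix of size d1 + d2.

  Lower bound: let A_i, B_j be a psd factorization of M of size k.  The zero upper-right block
  gives <A_i, B_j> = 0 for the rows i of P and the columns j of R, hence A_i B_j = 0 (via a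
  Gram decomposition of B_j).  Using this, an induction on a support set produces an invertible
  G with inverse H such that after the congruences A |-> G^T A G and B |-> H B H^T (which keep
  positive semidefiniteness and trace inner products) every A_i of P is supported on a
  coordinate set S and every B_j of R on its complement.  Restricting the factorization to S
  gives one of P of size |S|, restricting to the complement one of R of size k - |S|.
*)

section \<open>Bilinear forms and elementary facts on psd matrices\<close>

definition qform :: "nat \<Rightarrow> (nat \<Rightarrow> nat \<Rightarrow> real) \<Rightarrow> (nat \<Rightarrow> real) \<Rightarrow> (nat \<Rightarrow> real) \<Rightarrow> real" where
  "qform k X x y = (\<Sum>a<k. \<Sum>b<k. x a * X a b * y b)"

lemma qform_row: "qform k X x y = (\<Sum>a<k. x a * (\<Sum>b<k. X a b * y b))"
  unfolding qform_def by (simp add: sum_distrib_left mult.assoc)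

lemma qform_column: "qform k X x y = (\<Sum>b<k. (\<Sum>a<k. x a * X a b) * y b)"
  unfolding qform_def by (subst sum.swap) (simp add: sum_distrib_right mult.assoc)

lemma qform_linear_left: "qform k X (\<lambda>a. x a + t * y a) z = qform k X x z + t * qform k X y z"
  unfolding qform_def by (simp add: algebra_simps sum.distrib sum_distrib_left)

lemma qform_linear_right: "qform k X z (\<lambda>a. x a + t * y a) = qform k X z x + t * qform k X z y"
  unfolding qform_def by (simp add: algebra_simps sum.distrib sum_distrib_left)

lemma qform_unit_left: "c < k \<Longrightarrow> qform k X (\<lambda>a. if a = c then 1 else 0) y = (\<Sum>b<k. X c b * y b)"
  unfolding qform_row by (simp add: if_distrib[of "\<lambda>t. t * _"] cong: if_cong)

lemma qform_unit_right: "c < k \<Longrightarrow> qform k X y (\<lambda>b. if b = c then 1 else 0) = (\<Sum>a<k. y a * X a c)"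
  unfolding qform_column by (simp add: if_distrib[of "\<lambda>t. _ * t"] cong: if_cong)

lemma psd_symmetric: "psd_mat k X \<Longrightarrow> a < k \<Longrightarrow> b < k \<Longrightarrow> X a b = X b a"
  unfolding psd_mat_def by auto

lemma psd_qform_nonneg: "psd_mat k X \<Longrightarrow> 0 \<le> qform k X x x"
  unfolding psd_mat_def qform_def by auto

lemma qform_symmetric: "psd_mat k X \<Longrightarrow> qform k X x y = qform k X y x"
  unfolding qform_def by (subst sum.swap) (auto intro!: sum.cong simp: mult_ac psd_symmetric)

lemma psd_diag_nonneg: "psd_mat k X \<Longrightarrow> c < k \<Longrightarrow> 0 \<le> X c c"
  using psd_qform_nonneg[of k X "\<lambda>a. if a = c then 1 else 0"]
  by (simp add: qform_unit_left if_distrib cong: if_cong)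

text \<open>A vector on which the quadratic form of a psd matrix vanishes lies in its kernel.
  (Perturb x by a small multiple of Xx.)\<close>
lemma psd_null_vector:
  assumes X: "psd_mat k X" and null: "qform k X x x = 0" and a: "a < k"
  shows "(\<Sum>b<k. X a b * x b) = 0"
proof -
  define y where "y a = (\<Sum>b<k. X a b * x b)" for a
  define N where "N = (\<Sum>a<k. y a * y a)"
  define Q where "Q = qform k X y y"
  have yx: "qform k X y x = N" unfolding N_def qform_row y_def ..
  have xy: "qform k X x y = N" using qform_symmetric[OF X, of x y] yx by simp
  have Q0: "Q \<ge> 0" unfolding Q_def using psd_qform_nonneg[OF X] .
  have N0: "N \<ge> 0" unfolding N_def by (auto intro: sum_nonneg)
  have perturb: "0 \<le> 2 * t * N + t * t * Q" for t
  proof -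
    have "0 \<le> qform k X (\<lambda>a. x a + t * y a) (\<lambda>a. x a + t * y a)" by (rule psd_qform_nonneg[OF X])
    also have "\<dots> = 2 * t * N + t * t * Q"
      unfolding qform_linear_left qform_linear_right null xy yx Q_def by (simp add: algebra_simps)
    finally show ?thesis .
  qed
  have "N = 0"
  proof (rule ccontr)
    assume "N \<noteq> 0"
    hence Np: "N > 0" using N0 by simp
    define e where "e = N / (Q + 1)"
    have ep: "e > 0" using Np Q0 unfolding e_def by simp
    have "0 \<le> 2 * (-e) * N + (-e) * (-e) * Q" by (rule perturb)
    hence "e * (2 * N) \<le> e * (e * Q)" by (simp add: algebra_simps)
    hence "2 * N \<le> e * Q" using ep by simp
    moreover have "e * Q \<le> N" unfolding e_def using Np Q0 by (simp add: field_simps)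
    ultimately show False using Np by simp
  qed
  hence "\<forall>a\<in>{..<k}. y a * y a = 0" unfolding N_def
    by (subst (asm) sum_nonneg_eq_0_iff) auto
  thus ?thesis using a unfolding y_def by simp
qed

lemma psd_zero_diag:
  assumes X: "psd_mat k X" and "X c c = 0" "c < k" "b < k"
  shows "X b c = 0" "X c b = 0"
proof -
  have "qform k X (\<lambda>a. if a = c then 1 else 0) (\<lambda>a. if a = c then 1 else 0) = 0"
    using assms by (simp add: qform_unit_left if_distrib cong: if_cong)
  hence "(\<Sum>a<k. X b a * (if a = c then 1 else 0)) = 0" using psd_null_vector[OF X _ \<open>b < k\<close>] by simp
  thus "X b c = 0" using assms by (simp add: if_distrib cong: if_cong)
  thus "X c b = 0" using psd_symmetric[OF X] assms by metis
qed

definition supported_on :: "nat \<Rightarrow> nat set \<Rightarrow> (nat \<Rightarrow> nat \<Rightarrow> real) \<Rightarrow> bool" where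
  "supported_on k T X \<longleftrightarrow> (\<forall>a<k. \<forall>b<k. (a \<notin> T \<or> b \<notin> T) \<longrightarrow> X a b = 0)"

lemma psd_supported_off_zero_diag:
  assumes X: "psd_mat k X" and zero: "\<forall>m\<in>F. X m m = 0"
  shows "supported_on k ({..<k} - F) X"
  unfolding supported_on_def using psd_zero_diag[OF X] zero by blast

lemma supported_on_Int:
  "supported_on k S X \<Longrightarrow> supported_on k T X \<Longrightarrow> supported_on k (S \<inter> T) X"
  unfolding supported_on_def by blast

section \<open>Gram decomposition and orthogonality of psd matrices\<close>

lemma schur_complement_psd:
  assumes X: "psd_mat k X" and c: "c < k" and pos: "X c c > 0"
  shows "psd_mat k (\<lambda>a b. X a b - X a c * X b c / X c c)"
  unfolding psd_mat_def qform_def[symmetric]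
proof (intro conjI allI impI)
  fix a b assume "a < k" "b < k"
  thus "X a b - X a c * X b c / X c c = X b a - X b c * X a c / X c c"
    using psd_symmetric[OF X] by (simp add: mult.commute)
next
  fix x :: "nat \<Rightarrow> real"
  define L where "L = (\<Sum>a<k. x a * X a c)"
  define e where "e = (\<lambda>a. if a = c then 1 else (0::real))"
  define s where "s = - (L / X c c)"
  have "qform k (\<lambda>a b. X a b - X a c * X b c / X c c) x x
      = (\<Sum>a<k. \<Sum>b<k. x a * X a b * x b - (x a * X a c) * (X b c * x b) / X c c)"
    unfolding qform_def by (intro sum.cong refl) (simp add: algebra_simps)
  also have "\<dots> = qform k X x x - L * L / X c c"
    by (simp add: qform_def L_def sum_subtractf sum_product sum_divide_distrib mult.commute)
  finally have schur: "qform k (\<lambda>a b. X a b - X a c * X b c / X c c) x x = qform k X x x - L * L / X c c" .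
  have ex: "qform k X e x = L"
    unfolding e_def qform_unit_left[OF c] L_def using psd_symmetric[OF X] c
    by (auto intro!: sum.cong simp: mult.commute)
  have xe: "qform k X x e = L" unfolding e_def qform_unit_right[OF c] L_def ..
  have ee: "qform k X e e = X c c" unfolding e_def qform_unit_left[OF c] using c
    by (simp add: if_distrib[of "\<lambda>t. _ * t"] cong: if_cong)
  have "0 \<le> qform k X (\<lambda>a. x a + s * e a) (\<lambda>a. x a + s * e a)" by (rule psd_qform_nonneg[OF X])
  also have "\<dots> = qform k X x x + s * L + s * (L + s * X c c)"
    unfolding qform_linear_left qform_linear_right ex xe ee by (simp add: algebra_simps)
  also have "\<dots> = qform k X x x - L * L / X c c"
    unfolding s_def using pos by (simp add: field_simps)
  finally show "0 \<le> qform k (\<lambda>a b. X a b - X a c * X b c / X c c) x x" unfolding schur .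
qed

lemma schur_complement_support:
  assumes X: "psd_mat k X" and c: "c < k" and pos: "X c c > 0" and supp: "supported_on k {c..<k} X"
  shows "supported_on k {Suc c..<k} (\<lambda>a b. X a b - X a c * X b c / X c c)"
  unfolding supported_on_def
proof (intro allI impI)
  fix a b assume ab: "a < k" "b < k" "a \<notin> {Suc c..<k} \<or> b \<notin> {Suc c..<k}"
  have zero: "X a b = 0" if "a < k" "b < k" "a < c \<or> b < c" for a b
    using supp that unfolding supported_on_def by auto
  from ab consider "a < c \<or> b < c" | "a = c" | "b = c" by fastforce
  thus "X a b - X a c * X b c / X c c = 0"
  proof cases
    case 1 thus ?thesis using zero ab c by auto
  qed (use pos psd_symmetric[OF X] ab c in auto)
qed

text \<open>Gram decomposition X = sum_l w_l w_l^T of a psd matrix, by successive Schur complements;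
  the induction runs over the first coordinate c of the support.\<close>
lemma psd_gram_from:
  assumes "psd_mat k X" and "supported_on k {c..<k} X"
  shows "\<exists>W (r::nat). \<forall>a<k. \<forall>b<k. X a b = (\<Sum>l<r. W l a * W l b)"
  using assms
proof (induction "k - c" arbitrary: c X)
  case 0
  hence "\<forall>a<k. \<forall>b<k. X a b = (\<Sum>l<0::nat. W l a * W l b)" for W
    unfolding supported_on_def by simp
  thus ?case by blast
next
  case (Suc n)
  have X: "psd_mat k X" and c: "c < k" and n: "n = k - Suc c" using Suc by auto
  show ?case
  proof (cases "X c c = 0")
    case True
    have "supported_on k ({..<k} - {c}) X"
      by (rule psd_supported_off_zero_diag[OF X]) (use True in simp)
    hence "supported_on k ({c..<k} \<inter> ({..<k} - {c})) X"
      by (rule supported_on_Int[OF \<open>supported_on k {c..<k} X\<close>])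
    moreover have "{c..<k} \<inter> ({..<k} - {c}) = {Suc c..<k}" by auto
    ultimately show ?thesis using Suc.hyps(1)[OF n X] by simp
  next
    case False
    hence pos: "X c c > 0" using psd_diag_nonneg[OF X c] by simp
    define w where "w a = X a c / sqrt (X c c)" for a
    have ww: "w a * w b = X a c * X b c / X c c" for a b
      unfolding w_def using pos by (simp add: field_simps)
    obtain W and r :: nat where W: "\<forall>a<k. \<forall>b<k. X a b - X a c * X b c / X c c = (\<Sum>l<r. W l a * W l b)"
      using Suc.hyps(1)[OF n schur_complement_psd[OF X c pos]
          schur_complement_support[OF X c pos \<open>supported_on k {c..<k} X\<close>]] by blast
    have "X a b = (\<Sum>l<Suc r. (W(r := w)) l a * (W(r := w)) l b)" if "a < k" "b < k" for a b
    proof -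
      have "X a b - X a c * X b c / X c c = (\<Sum>l<r. W l a * W l b)" using W that by blast
      thus ?thesis by (simp add: ww algebra_simps)
    qed
    thus ?thesis by blast
  qed
qed

lemma psd_gram:
  assumes "psd_mat k X" shows "\<exists>W (r::nat). \<forall>a<k. \<forall>b<k. X a b = (\<Sum>l<r. W l a * W l b)"
  by (rule psd_gram_from[OF assms, of 0]) (simp add: supported_on_def)

text \<open>Two psd matrices with vanishing trace inner product have zero product: with
  Y = sum_l w_l w_l^T the trace <X, Y> is the sum of the nonnegative numbers w_l^T X w_l, so each
  vanishes, every w_l lies in the kernel of X, and hence X Y = 0.\<close>
lemma psd_trace_zero_product:
  assumes X: "psd_mat k X" and Y: "psd_mat k Y" and orth: "trace_inner k X Y = 0"
    and a: "a < k" and b: "b < k"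
  shows "(\<Sum>c<k. X a c * Y c b) = 0"
proof -
  obtain W and r :: nat where W: "\<forall>a<k. \<forall>b<k. Y a b = (\<Sum>l<r. W l a * W l b)"
    using psd_gram[OF Y] by blast
  have "trace_inner k X Y = (\<Sum>a<k. \<Sum>b<k. X a b * (\<Sum>l<r. W l b * W l a))"
    unfolding trace_inner_def using W by (intro sum.cong refl) simp
  also have "\<dots> = (\<Sum>a<k. \<Sum>b<k. \<Sum>l<r. W l a * X a b * W l b)"
    by (simp add: sum_distrib_left mult_ac)
  also have "\<dots> = (\<Sum>l<r. qform k X (W l) (W l))"
    unfolding qform_def by (subst sum.swap, rule sum.cong[OF refl], rule sum.swap)
  finally have "(\<Sum>l<r. qform k X (W l) (W l)) = 0" using orth by simp
  hence "\<forall>l\<in>{..<r}. qform k X (W l) (W l) = 0"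
    by (subst (asm) sum_nonneg_eq_0_iff) (simp_all add: psd_qform_nonneg[OF X])
  hence kernel: "(\<Sum>c<k. X a c * W l c) = 0" if "l < r" for l
    using psd_null_vector[OF X _ a] that by auto
  have "(\<Sum>c<k. X a c * Y c b) = (\<Sum>c<k. \<Sum>l<r. X a c * W l c * W l b)"
    using W b by (simp add: sum_distrib_left mult.assoc)
  also have "\<dots> = (\<Sum>l<r. (\<Sum>c<k. X a c * W l c) * W l b)"
    by (subst sum.swap) (simp add: sum_distrib_right)
  also have "\<dots> = 0" using kernel by simp
  finally show ?thesis .
qed

section \<open>Matrix algebra on k-by-k matrices and congruence transformations\<close>

definition mat_mult :: "nat \<Rightarrow> (nat \<Rightarrow> nat \<Rightarrow> real) \<Rightarrow> (nat \<Rightarrow> nat \<Rightarrow> real) \<Rightarrow> nat \<Rightarrow> nat \<Rightarrow> real" where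
  "mat_mult k X Y = (\<lambda>a b. if a < k \<and> b < k then (\<Sum>c<k. X a c * Y c b) else 0)"

definition mat_restrict :: "nat \<Rightarrow> (nat \<Rightarrow> nat \<Rightarrow> real) \<Rightarrow> nat \<Rightarrow> nat \<Rightarrow> real" where
  "mat_restrict k X = (\<lambda>a b. if a < k \<and> b < k then X a b else 0)"

definition id_mat :: "nat \<Rightarrow> nat \<Rightarrow> nat \<Rightarrow> real" where
  "id_mat k = (\<lambda>a b. if a < k \<and> b < k \<and> a = b then 1 else 0)"

definition transp_mat :: "(nat \<Rightarrow> nat \<Rightarrow> real) \<Rightarrow> nat \<Rightarrow> nat \<Rightarrow> real" where
  "transp_mat X = (\<lambda>a b. X b a)"

definition mat_trace :: "nat \<Rightarrow> (nat \<Rightarrow> nat \<Rightarrow> real) \<Rightarrow> real" where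
  "mat_trace k X = (\<Sum>a<k. X a a)"

definition congruence :: "nat \<Rightarrow> (nat \<Rightarrow> nat \<Rightarrow> real) \<Rightarrow> (nat \<Rightarrow> nat \<Rightarrow> real) \<Rightarrow> nat \<Rightarrow> nat \<Rightarrow> real" where
  "congruence k G A = mat_mult k (transp_mat G) (mat_mult k A G)"

lemma mat_mult_entry: "a < k \<Longrightarrow> b < k \<Longrightarrow> mat_mult k X Y a b = (\<Sum>c<k. X a c * Y c b)"
  by (simp add: mat_mult_def)

lemma mat_mult_assoc: "mat_mult k (mat_mult k X Y) Z = mat_mult k X (mat_mult k Y Z)"
proof (intro ext)
  fix a b
  show "mat_mult k (mat_mult k X Y) Z a b = mat_mult k X (mat_mult k Y Z) a b"
  proof (cases "a < k \<and> b < k")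
    case True
    have "mat_mult k (mat_mult k X Y) Z a b = (\<Sum>c<k. \<Sum>d<k. X a d * Y d c * Z c b)"
      using True by (simp add: mat_mult_entry sum_distrib_right)
    also have "\<dots> = (\<Sum>d<k. X a d * (\<Sum>c<k. Y d c * Z c b))"
      by (subst sum.swap) (simp add: sum_distrib_left mult.assoc)
    also have "\<dots> = mat_mult k X (mat_mult k Y Z) a b"
      using True by (simp add: mat_mult_entry)
    finally show ?thesis .
  qed (auto simp: mat_mult_def)
qed

lemma mat_mult_restrict_right: "mat_mult k X (mat_restrict k Y) = mat_mult k X Y"
  unfolding mat_mult_def mat_restrict_def by (intro ext) (auto intro!: sum.cong)

lemma mat_mult_id_left: "mat_mult k (id_mat k) X = mat_restrict k X"
  unfolding mat_mult_def mat_restrict_def id_mat_def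
  by (intro ext) (simp add: if_distrib[of "\<lambda>t. t * _"] cong: if_cong)

lemma mat_mult_id_right: "mat_mult k X (id_mat k) = mat_restrict k X"
  unfolding mat_mult_def mat_restrict_def id_mat_def
  by (intro ext) (simp add: if_distrib[of "\<lambda>t. _ * t"] cong: if_cong)

lemma transp_mat_mult: "transp_mat (mat_mult k X Y) = mat_mult k (transp_mat Y) (transp_mat X)"
  unfolding transp_mat_def mat_mult_def by (intro ext) (auto simp: mult.commute)

lemma transp_id_mat: "transp_mat (id_mat k) = id_mat k"
  by (auto simp: transp_mat_def id_mat_def intro!: ext)

lemma mat_trace_commute: "mat_trace k (mat_mult k X Y) = mat_trace k (mat_mult k Y X)"
proof -
  have "mat_trace k (mat_mult k X Y) = (\<Sum>a<k. \<Sum>c<k. X a c * Y c a)"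
    unfolding mat_trace_def by (simp add: mat_mult_entry)
  also have "\<dots> = mat_trace k (mat_mult k Y X)"
    unfolding mat_trace_def by (subst sum.swap) (simp add: mat_mult_entry mult.commute)
  finally show ?thesis .
qed

lemma trace_inner_mat_trace: "trace_inner k A B = mat_trace k (mat_mult k A B)"
  unfolding trace_inner_def mat_trace_def by (simp add: mat_mult_entry)

text \<open>If G H = I, transforming A by G and B by H^T preserves the trace inner product:
  tr(G^T A G H B H^T) = tr(A G H B H^T G^T) = tr(A B).\<close>
lemma trace_inner_congruence:
  assumes GH: "mat_mult k G H = id_mat k"
  shows "trace_inner k (congruence k G A) (congruence k (transp_mat H) B) = trace_inner k A B"
proof -
  have HG: "mat_mult k (transp_mat H) (transp_mat G) = id_mat k"
    using arg_cong[OF GH, of transp_mat] by (simp add: transp_mat_mult transp_id_mat)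
  have "trace_inner k (congruence k G A) (congruence k (transp_mat H) B)
      = mat_trace k (mat_mult k (transp_mat G) (mat_mult k A (mat_mult k G (mat_mult k H (mat_mult k B (transp_mat H))))))"
    unfolding trace_inner_mat_trace congruence_def by (simp add: mat_mult_assoc transp_mat_def)
  also have "\<dots> = mat_trace k (mat_mult k A (mat_mult k (mat_mult k G H) (mat_mult k B (mat_mult k (transp_mat H) (transp_mat G)))))"
    by (subst mat_trace_commute) (simp add: mat_mult_assoc)
  also have "\<dots> = trace_inner k A B"
    unfolding GH HG trace_inner_mat_trace
    by (simp add: mat_mult_id_left mat_mult_id_right mat_mult_restrict_right)
  finally show ?thesis .
qed

lemma congruence_comp:
  "congruence k (mat_mult k X Y) A = congruence k Y (congruence k X A)"
  unfolding congruence_def by (simp add: transp_mat_mult mat_mult_assoc)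

lemma congruence_id: "congruence k (id_mat k) X = mat_restrict k X"
  unfolding congruence_def mat_mult_id_right transp_id_mat mat_mult_id_left
  by (intro ext) (simp add: mat_restrict_def)

lemma congruence_entry:
  assumes "a < k" "b < k"
  shows "congruence k G A a b = qform k A (\<lambda>c. G c a) (\<lambda>d. G d b)"
  unfolding congruence_def qform_row using assms
  by (simp add: mat_mult_entry transp_mat_def mult.assoc)

lemma qform_sum_left:
  "qform k X (\<lambda>c. \<Sum>a<k. G c a * x a) y = (\<Sum>a<k. x a * qform k X (\<lambda>c. G c a) y)"
proof -
  have "qform k X (\<lambda>c. \<Sum>a<k. G c a * x a) y = (\<Sum>c<k. \<Sum>a<k. G c a * x a * (\<Sum>b<k. X c b * y b))"
    unfolding qform_row by (simp add: sum_distrib_right)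
  also have "\<dots> = (\<Sum>a<k. x a * qform k X (\<lambda>c. G c a) y)"
    unfolding qform_row by (subst sum.swap) (simp add: sum_distrib_left mult_ac)
  finally show ?thesis .
qed

lemma qform_sum_right:
  "qform k X y (\<lambda>c. \<Sum>a<k. G c a * x a) = (\<Sum>a<k. x a * qform k X y (\<lambda>c. G c a))"
proof -
  have "qform k X y (\<lambda>c. \<Sum>a<k. G c a * x a) = (\<Sum>c<k. \<Sum>a<k. (\<Sum>b<k. y b * X b c) * G c a * x a)"
    unfolding qform_column by (simp add: sum_distrib_left mult.assoc)
  also have "\<dots> = (\<Sum>a<k. x a * qform k X y (\<lambda>c. G c a))"
    unfolding qform_column by (subst sum.swap) (simp add: sum_distrib_left mult_ac)
  finally show ?thesis .
qed

text \<open>x^T (G^T A G) x = (G x)^T A (G x), so congruence preserves positive semidefiniteness.\<close>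
lemma psd_congruence:
  assumes A: "psd_mat k A" shows "psd_mat k (congruence k G A)"
  unfolding psd_mat_def
proof (intro conjI allI impI)
  fix i j assume "i < k" "j < k"
  thus "congruence k G A i j = congruence k G A j i"
    using qform_symmetric[OF A] by (simp add: congruence_entry)
next
  fix x :: "nat \<Rightarrow> real"
  define y where "y c = (\<Sum>a<k. G c a * x a)" for c
  have "(\<Sum>i<k. \<Sum>j<k. x i * congruence k G A i j * x j)
      = (\<Sum>i<k. \<Sum>j<k. x i * (x j * qform k A (\<lambda>c. G c i) (\<lambda>d. G d j)))"
    by (intro sum.cong refl) (simp add: congruence_entry mult_ac)
  also have "\<dots> = qform k A y y"
    unfolding y_def qform_sum_left qform_sum_right by (simp add: sum_distrib_left)
  finally show "0 \<le> (\<Sum>i<k. \<Sum>j<k. x i * congruence k G A i j * x j)"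
    using psd_qform_nonneg[OF A] by simp
qed

section \<open>Splitting the supports of two mutually orthogonal families of psd matrices\<close>

lemma supported_on_restrict: "supported_on k S (mat_restrict k X) \<longleftrightarrow> supported_on k S X"
  unfolding supported_on_def mat_restrict_def by auto

definition column_replace :: "nat \<Rightarrow> nat \<Rightarrow> (nat \<Rightarrow> real) \<Rightarrow> nat \<Rightarrow> nat \<Rightarrow> real" where
  "column_replace k m v =
     (\<lambda>a b. if a < k \<and> b < k then (if b = m then v a else if a = b then 1 else 0) else 0)"

lemma column_replace_invertible:
  assumes m: "m < k" and vm: "v m \<noteq> 0"
  shows "\<exists>H. mat_mult k (column_replace k m v) H = id_mat k"
proof
  let ?G = "column_replace k m v"
  define u where "u a = (if a = m then 1 / v m else - v a / v m)" for a
  let ?H = "column_replace k m u"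
  show "mat_mult k ?G ?H = id_mat k"
  proof (intro ext)
    fix a b
    show "mat_mult k ?G ?H a b = id_mat k a b"
    proof (cases "a < k \<and> b < k")
      case False thus ?thesis by (auto simp: mat_mult_def id_mat_def)
    next
      case True
      hence a: "a < k" and b: "b < k" by auto
      show ?thesis
      proof (cases "b = m")
        case False
        have "mat_mult k ?G ?H a b = (\<Sum>c<k. if c = b then ?G a b else 0)"
          unfolding mat_mult_entry[OF a b] using False b by (intro sum.cong) (auto simp: column_replace_def)
        thus ?thesis using False a b by (simp add: column_replace_def id_mat_def)
      next
        case True
        have "mat_mult k ?G ?H a b = ?G a m * u m + (\<Sum>c\<in>{..<k} - {m}. ?G a c * u c)"
          unfolding mat_mult_entry[OF a b] using True m
          by (subst sum.remove[of _ m]) (auto simp: column_replace_def intro!: sum.cong)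
        also have "(\<Sum>c\<in>{..<k} - {m}. ?G a c * u c) = (\<Sum>c\<in>{..<k} - {m}. if c = a then u a else 0)"
          using a by (intro sum.cong) (auto simp: column_replace_def)
        also have "?G a m * u m + \<dots> = (if a = m then 1 else 0)"
          using a m vm by (auto simp: column_replace_def u_def sum.delta)
        finally show ?thesis using a b True by (simp add: id_mat_def)
      qed
    qed
  qed
qed

lemma congruence_kernel_column:
  assumes A: "psd_mat k A" and a: "a < k" and b: "b < k"
    and kernel: "\<forall>d<k. (\<Sum>c<k. G c a * A c d) = 0"
  shows "congruence k G A a b = 0" "congruence k G A b a = 0"
proof -
  show "congruence k G A a b = 0"
    unfolding congruence_entry[OF a b] qform_column using kernel by simp
  moreover have "congruence k G A b a = congruence k G A a b"
    unfolding congruence_entry[OF a b] congruence_entry[OF b a] by (rule qform_symmetric[OF A])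
  ultimately show "congruence k G A b a = 0" by simp
qed

text \<open>Column a of column_replace k m v is in the kernel of A if either a = m and A v = 0, or
  a is outside the support F of A (then the column is the unit vector e_a).\<close>
lemma column_replace_kernel:
  assumes A: "psd_mat k A" "supported_on k F A" and m: "m < k"
    and kernel: "\<forall>a<k. (\<Sum>c<k. A a c * v c) = 0"
    and a: "a < k" "a \<notin> F - {m}"
  shows "\<forall>d<k. (\<Sum>c<k. column_replace k m v c a * A c d) = 0"
proof (intro allI impI)
  fix d assume d: "d < k"
  show "(\<Sum>c<k. column_replace k m v c a * A c d) = 0"
  proof (cases "a = m")
    case True
    have "(\<Sum>c<k. column_replace k m v c a * A c d) = (\<Sum>c<k. A d c * v c)"
    proof (rule sum.cong)
      fix c assume c: "c \<in> {..<k}"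
      hence "A c d = A d c" using psd_symmetric[OF A(1) _ d] by simp
      thus "column_replace k m v c a * A c d = A d c * v c" using True m c by (simp add: column_replace_def)
    qed simp
    thus ?thesis using kernel d by simp
  next
    case False
    hence "A a d = 0" using A(2) a d unfolding supported_on_def by blast
    have "(\<Sum>c<k. column_replace k m v c a * A c d) = (\<Sum>c<k. if c = a then A a d else 0)"
      using False a by (intro sum.cong) (auto simp: column_replace_def)
    thus ?thesis using a \<open>A a d = 0\<close> by simp
  qed
qed

lemma column_replace_support:
  assumes A: "psd_mat k A" "supported_on k F A" and m: "m < k"
    and kernel: "\<forall>a<k. (\<Sum>c<k. A a c * v c) = 0"
  shows "supported_on k (F - {m}) (congruence k (column_replace k m v) A)"
  unfolding supported_on_def
proof (intro allI impI)
  fix a b assume a: "a < k" and b: "b < k" and ab: "a \<notin> F - {m} \<or> b \<notin> F - {m}"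
  note kernel_column = column_replace_kernel[OF A m kernel]
  from ab show "congruence k (column_replace k m v) A a b = 0"
  proof
    assume "a \<notin> F - {m}"
    from congruence_kernel_column(1)[where G = "column_replace k m v", OF A(1) a b kernel_column[OF a this]] show ?thesis .
  next
    assume "b \<notin> F - {m}"
    from congruence_kernel_column(2)[where G = "column_replace k m v", OF A(1) b a kernel_column[OF b this]] show ?thesis .
  qed
qed

definition split_within ::
  "nat \<Rightarrow> nat set \<Rightarrow> 'i set \<Rightarrow> ('i \<Rightarrow> nat \<Rightarrow> nat \<Rightarrow> real) \<Rightarrow> 'j set \<Rightarrow> ('j \<Rightarrow> nat \<Rightarrow> nat \<Rightarrow> real) \<Rightarrow> bool"
where
  "split_within k F I A J B \<longleftrightarrow>
     (\<exists>G H S. mat_mult k G H = id_mat k \<and> S \<subseteq> F \<and>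
        (\<forall>i\<in>I. supported_on k S (congruence k G (A i))) \<and>
        (\<forall>j\<in>J. supported_on k ({..<k} - S) (congruence k (transp_mat H) (B j))))"

lemma split_within_zero_diag:
  assumes A: "\<forall>i\<in>I. supported_on k F (A i)"
    and B: "\<forall>j\<in>J. psd_mat k (B j) \<and> (\<forall>m\<in>F. B j m m = 0)"
  shows "split_within k F I A J B"
proof -
  have "\<forall>j\<in>J. supported_on k ({..<k} - F) (congruence k (transp_mat (id_mat k)) (B j))"
    using B psd_supported_off_zero_diag
    by (simp add: transp_id_mat congruence_id supported_on_restrict)
  moreover have "\<forall>i\<in>I. supported_on k F (congruence k (id_mat k) (A i))"
    using A by (simp add: congruence_id supported_on_restrict)
  moreover have "mat_mult k (id_mat k) (id_mat k) = id_mat k"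
    unfolding mat_mult_id_left by (intro ext) (simp add: mat_restrict_def id_mat_def)
  ultimately show ?thesis unfolding split_within_def by blast
qed

lemma split_within_congruence:
  assumes GH1: "mat_mult k G1 H1 = id_mat k" and F': "F' \<subseteq> F"
    and split: "split_within k F' I (\<lambda>i. congruence k G1 (A i)) J (\<lambda>j. congruence k (transp_mat H1) (B j))"
  shows "split_within k F I A J B"
proof -
  obtain G2 H2 S where GH2: "mat_mult k G2 H2 = id_mat k" and S: "S \<subseteq> F'"
    and SA: "\<forall>i\<in>I. supported_on k S (congruence k G2 (congruence k G1 (A i)))"
    and SB: "\<forall>j\<in>J. supported_on k ({..<k} - S) (congruence k (transp_mat H2) (congruence k (transp_mat H1) (B j)))"
    using split unfolding split_within_def by blast
  have "mat_mult k (mat_mult k G1 G2) (mat_mult k H2 H1) = mat_mult k G1 (mat_mult k (mat_mult k G2 H2) H1)"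
    by (simp only: mat_mult_assoc)
  also have "\<dots> = id_mat k"
    unfolding GH2 mat_mult_id_left mat_mult_restrict_right GH1 ..
  finally have "mat_mult k (mat_mult k G1 G2) (mat_mult k H2 H1) = id_mat k" .
  thus ?thesis unfolding split_within_def using SA SB S F'
    by (intro exI[of _ "mat_mult k G1 G2"] exI[of _ "mat_mult k H2 H1"] exI[of _ S])
      (auto simp: congruence_comp transp_mat_mult)
qed

text \<open>If A is psd and supported on F, B is psd and <A, B> = 0, then the restriction to F of any
  column m of B lies in the kernel of A, since A B = 0.\<close>
lemma orthogonal_column_kernel:
  assumes A: "psd_mat k A" "supported_on k F A" and B: "psd_mat k B"
    and orth: "trace_inner k A B = 0" and a: "a < k" and m: "m < k"
  shows "(\<Sum>c<k. A a c * (if c \<in> F then B c m else 0)) = 0"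
proof -
  have "(\<Sum>c<k. A a c * (if c \<in> F then B c m else 0)) = (\<Sum>c<k. A a c * B c m)"
    using A(2) a unfolding supported_on_def by (intro sum.cong) auto
  also have "\<dots> = 0" by (rule psd_trace_zero_product[OF A(1) B orth a m])
  finally show ?thesis .
qed

text \<open>If some B_j has a nonzero diagonal entry at m \<in> F, the restriction to F of column m
  of B_j is a common kernel vector of the A_i, so a congruence removes m from F; otherwise
  the B_j already vanish on F.\<close>
lemma simultaneous_support_split:
  assumes F: "F \<subseteq> {..<k}"
    and A: "\<forall>i\<in>I. psd_mat k (A i) \<and> supported_on k F (A i)"
    and B: "\<forall>j\<in>J. psd_mat k (B j)"
    and orth: "\<forall>i\<in>I. \<forall>j\<in>J. trace_inner k (A i) (B j) = 0"
  shows "split_within k F I A J B"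
proof -
  have "finite F" using F finite_subset by blast
  thus ?thesis using assms
  proof (induction F arbitrary: A B rule: finite_psubset_induct)
    case (psubset F A B)
    show ?case
    proof (cases "\<exists>j\<in>J. \<exists>m\<in>F. B j m m \<noteq> 0")
      case False
      thus ?thesis using psubset.prems(2,3) by (intro split_within_zero_diag) auto
    next
      case True
      then obtain j m where j: "j \<in> J" and mF: "m \<in> F" and Bm: "B j m m \<noteq> 0" by blast
      have m: "m < k" using mF psubset.prems(1) by auto
      define v where "v c = (if c \<in> F then B j c m else 0)" for c
      have kernel: "\<forall>i\<in>I. \<forall>a<k. (\<Sum>c<k. A i a c * v c) = 0"
        using orthogonal_column_kernel[OF _ _ _ _ _ m] psubset.prems j unfolding v_def by blast
      have "v m \<noteq> 0" using Bm mF by (simp add: v_def)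
      define G1 where "G1 = column_replace k m v"
      obtain H1 where GH1: "mat_mult k G1 H1 = id_mat k"
        using column_replace_invertible[where v = v, OF m \<open>v m \<noteq> 0\<close>] unfolding G1_def by blast
      have shrunk: "\<forall>i\<in>I. supported_on k (F - {m}) (congruence k G1 (A i))"
        using column_replace_support[OF _ _ m] kernel psubset.prems(2) unfolding G1_def by blast
      have "split_within k (F - {m}) I (\<lambda>i. congruence k G1 (A i)) J (\<lambda>j. congruence k (transp_mat H1) (B j))"
      proof (rule psubset.IH)
        show "F - {m} \<subset> F" using mF by blast
        show "F - {m} \<subseteq> {..<k}" using psubset.prems(1) by blast
      qed (use psubset.prems shrunk psd_congruence in \<open>simp_all add: trace_inner_congruence[OF GH1]\<close>)
      thus ?thesis by (rule split_within_congruence[OF GH1 Diff_subset])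
    qed
  qed
qed

section \<open>Restricting a factorization to a coordinate subset\<close>

lemma double_sum_reindex:
  fixes h :: "nat \<Rightarrow> nat \<Rightarrow> real"
  assumes f: "bij_betw f {..<n} T" and T: "T \<subseteq> {..<k}"
    and h: "\<And>a b. a < k \<Longrightarrow> b < k \<Longrightarrow> a \<notin> T \<or> b \<notin> T \<Longrightarrow> h a b = 0"
  shows "(\<Sum>a<k. \<Sum>b<k. h a b) = (\<Sum>a<n. \<Sum>b<n. h (f a) (f b))"
proof -
  have "(\<Sum>a<k. \<Sum>b<k. h a b) = (\<Sum>a\<in>T. \<Sum>b<k. h a b)"
    by (rule sum.mono_neutral_right) (use T h in auto)
  also have "\<dots> = (\<Sum>a\<in>T. \<Sum>b\<in>T. h a b)"
    by (intro sum.cong refl sum.mono_neutral_right) (use T h in auto)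
  also have "\<dots> = (\<Sum>a<n. \<Sum>b\<in>T. h (f a) b)"
    by (rule sum.reindex_bij_betw[OF f, symmetric])
  also have "\<dots> = (\<Sum>a<n. \<Sum>b<n. h (f a) (f b))"
    by (intro sum.cong refl) (rule sum.reindex_bij_betw[OF f, symmetric])
  finally show ?thesis .
qed

lemma psd_compress:
  assumes X: "psd_mat k X" and f: "bij_betw f {..<n} T" and T: "T \<subseteq> {..<k}"
  shows "psd_mat n (\<lambda>a b. X (f a) (f b))"
  unfolding psd_mat_def
proof (intro conjI allI impI)
  fix i j assume "i < n" "j < n"
  thus "X (f i) (f j) = X (f j) (f i)" using psd_symmetric[OF X] bij_betwE[OF f] T by blast
next
  fix x :: "nat \<Rightarrow> real"
  define y where "y c = (if c \<in> T then x (inv_into {..<n} f c) else 0)" for c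
  have yf: "y (f a) = x a" if "a < n" for a
    using that bij_betwE[OF f] bij_betw_imp_inj_on[OF f] unfolding y_def by (simp add: inv_into_f_f)
  have "0 \<le> qform k X y y" by (rule psd_qform_nonneg[OF X])
  also have "qform k X y y = (\<Sum>a<n. \<Sum>b<n. y (f a) * X (f a) (f b) * y (f b))"
    unfolding qform_def by (rule double_sum_reindex[OF f T]) (auto simp: y_def)
  also have "\<dots> = (\<Sum>a<n. \<Sum>b<n. x a * X (f a) (f b) * x b)"
    by (intro sum.cong refl) (simp add: yf)
  finally show "0 \<le> (\<Sum>a<n. \<Sum>b<n. x a * X (f a) (f b) * x b)" .
qed

lemma factorization_compress:
  assumes S: "S \<subseteq> {..<k}"
    and A: "\<forall>i<p. psd_mat k (A i)" and B: "\<forall>j<q. psd_mat k (B j)"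
    and M: "\<forall>i<p. \<forall>j<q. M i j = trace_inner k (A i) (B j)"
    and supp: "\<forall>i<p. \<forall>j<q. supported_on k S (A i) \<or> supported_on k S (B j)"
  shows "has_psd_factorization p q M (card S)"
proof -
  have "finite S" using S finite_subset by blast
  then obtain f where f: "bij_betw f {..<card S} S"
    using ex_bij_betw_nat_finite by (auto simp: atLeast0LessThan)
  have "trace_inner k (A i) (B j) = trace_inner (card S) (\<lambda>a b. A i (f a) (f b)) (\<lambda>a b. B j (f a) (f b))"
    if ij: "i < p" "j < q" for i j
    unfolding trace_inner_def
  proof (rule double_sum_reindex[OF f S])
    fix a b assume "a < k" "b < k" "a \<notin> S \<or> b \<notin> S"
    thus "A i a b * B j b a = 0" using supp ij unfolding supported_on_def by auto
  qed
  thus ?thesis unfolding has_psd_factorization_def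
    using psd_compress[OF _ f S] A B M by (intro exI[of _ "\<lambda>i a b. A i (f a) (f b)"]
        exI[of _ "\<lambda>j a b. B j (f a) (f b)"]) simp
qed

text \<open>A factorization of the block matrix can be normalised, keeping its size k, so that the
  row factors of P live on a coordinate set S and the column factors of R on its complement:
  the zero block makes these two families orthogonal, so they can be split.\<close>
lemma block_factorization_separated:
  assumes "has_psd_factorization (p1 + p2) (q1 + q2) (block_mat p1 q1 P Q R) k"
  shows "\<exists>A B S. S \<subseteq> {..<k} \<and> (\<forall>i<p1+p2. psd_mat k (A i)) \<and> (\<forall>j<q1+q2. psd_mat k (B j)) \<and>
           (\<forall>i<p1+p2. \<forall>j<q1+q2. block_mat p1 q1 P Q R i j = trace_inner k (A i) (B j)) \<and>
           (\<forall>i<p1. supported_on k S (A i)) \<and> (\<forall>j<q2. supported_on k ({..<k} - S) (B (q1 + j)))"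
proof -
  let ?M = "block_mat p1 q1 P Q R"
  obtain A B where A: "\<forall>i<p1+p2. psd_mat k (A i)" and B: "\<forall>j<q1+q2. psd_mat k (B j)"
    and M: "\<forall>i<p1+p2. \<forall>j<q1+q2. ?M i j = trace_inner k (A i) (B j)"
    using assms unfolding has_psd_factorization_def by blast
  have orth: "\<forall>i\<in>{..<p1}. \<forall>j\<in>{q1..<q1+q2}. trace_inner k (A i) (B j) = 0"
  proof (intro ballI)
    fix i j assume i: "i \<in> {..<p1}" and j: "j \<in> {q1..<q1+q2}"
    hence "?M i j = 0" by (simp add: block_mat_def)
    thus "trace_inner k (A i) (B j) = 0" using M i j by simp
  qed
  have "split_within k {..<k} {..<p1} A {q1..<q1+q2} B"
    using simultaneous_support_split[OF order_refl _ _ orth] A B by (simp add: supported_on_def)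
  then obtain G H S where GH: "mat_mult k G H = id_mat k" and S: "S \<subseteq> {..<k}"
    and SA: "\<forall>i\<in>{..<p1}. supported_on k S (congruence k G (A i))"
    and SB: "\<forall>j\<in>{q1..<q1+q2}. supported_on k ({..<k} - S) (congruence k (transp_mat H) (B j))"
    unfolding split_within_def by blast
  show ?thesis
  proof (intro exI conjI)
    show "\<forall>i<p1+p2. psd_mat k (congruence k G (A i))" using A psd_congruence by blast
    show "\<forall>j<q1+q2. psd_mat k (congruence k (transp_mat H) (B j))" using B psd_congruence by blast
    show "\<forall>i<p1+p2. \<forall>j<q1+q2. ?M i j = trace_inner k (congruence k G (A i)) (congruence k (transp_mat H) (B j))"
      using M unfolding trace_inner_congruence[OF GH] .
  qed (use S SA SB in auto)
qed

text \<open>A factorization of the block matrix of size k splits into factorizations of P and R of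
  sizes adding up to k, by restricting the normalised factorization to S and to its complement.\<close>
lemma block_factorization_split:
  assumes "has_psd_factorization (p1 + p2) (q1 + q2) (block_mat p1 q1 P Q R) k"
  shows "\<exists>s t. s + t = k \<and> has_psd_factorization p1 q1 P s \<and> has_psd_factorization p2 q2 R t"
proof -
  obtain A B S where S: "S \<subseteq> {..<k}"
    and A: "\<forall>i<p1+p2. psd_mat k (A i)" and B: "\<forall>j<q1+q2. psd_mat k (B j)"
    and M: "\<forall>i<p1+p2. \<forall>j<q1+q2. block_mat p1 q1 P Q R i j = trace_inner k (A i) (B j)"
    and SA: "\<forall>i<p1. supported_on k S (A i)" and SB: "\<forall>j<q2. supported_on k ({..<k} - S) (B (q1 + j))"
    using block_factorization_separated[OF assms] by blast
  have "has_psd_factorization p1 q1 P (card S)"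
  proof (rule factorization_compress[OF S])
    show "\<forall>i<p1. \<forall>j<q1. P i j = trace_inner k (A i) (B j)"
    proof (intro allI impI)
      fix i j assume "i < p1" "j < q1"
      thus "P i j = trace_inner k (A i) (B j)" using M[rule_format, of i j] by (simp add: block_mat_def)
    qed
  qed (use A B SA in auto)
  moreover have "has_psd_factorization p2 q2 R (card ({..<k} - S))"
  proof (rule factorization_compress)
    show "\<forall>i<p2. \<forall>j<q2. R i j = trace_inner k (A (p1 + i)) (B (q1 + j))"
    proof (intro allI impI)
      fix i j assume "i < p2" "j < q2"
      thus "R i j = trace_inner k (A (p1 + i)) (B (q1 + j))"
        using M[rule_format, of "p1 + i" "q1 + j"] by (simp add: block_mat_def)
    qed
  qed (use A B SB in auto)
  moreover have "card S + card ({..<k} - S) = k"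
  proof -
    have "card S \<le> k" using card_mono[OF _ S] by simp
    thus ?thesis using S by (simp add: card_Diff_subset finite_subset)
  qed
  ultimately show ?thesis by blast
qed

section \<open>Direct sums of factorizations\<close>

definition diag_sum :: "nat \<Rightarrow> (nat \<Rightarrow> nat \<Rightarrow> real) \<Rightarrow> (nat \<Rightarrow> nat \<Rightarrow> real) \<Rightarrow> nat \<Rightarrow> nat \<Rightarrow> real" where
  "diag_sum d X Y a b =
     (if a < d \<and> b < d then X a b else if d \<le> a \<and> d \<le> b then Y (a - d) (b - d) else 0)"

lemma sum_lessThan_add:
  fixes g :: "nat \<Rightarrow> 'a::comm_monoid_add"
  shows "(\<Sum>a<d1 + d2. g a) = (\<Sum>a<d1. g a) + (\<Sum>a<d2. g (d1 + a))"
  by (induction d2) (simp_all add: add.assoc)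

lemma double_sum_block_split:
  fixes h :: "nat \<Rightarrow> nat \<Rightarrow> real"
  assumes mixed: "\<And>a b. (a < d1) \<noteq> (b < d1) \<Longrightarrow> h a b = 0"
  shows "(\<Sum>a<d1 + d2. \<Sum>b<d1 + d2. h a b)
           = (\<Sum>a<d1. \<Sum>b<d1. h a b) + (\<Sum>a<d2. \<Sum>b<d2. h (d1 + a) (d1 + b))"
  using mixed by (simp add: sum_lessThan_add sum.distrib)

lemma psd_diag_sum:
  assumes X: "psd_mat d1 X" and Y: "psd_mat d2 Y"
  shows "psd_mat (d1 + d2) (diag_sum d1 X Y)"
  unfolding psd_mat_def
proof (intro conjI allI impI)
  fix a b assume "a < d1 + d2" "b < d1 + d2"
  thus "diag_sum d1 X Y a b = diag_sum d1 X Y b a"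
    using psd_symmetric[OF X, of a b] psd_symmetric[OF Y, of "a - d1" "b - d1"]
    by (auto simp: diag_sum_def)
next
  fix x :: "nat \<Rightarrow> real"
  have "(\<Sum>a<d1 + d2. \<Sum>b<d1 + d2. x a * diag_sum d1 X Y a b * x b)
      = qform d1 X x x + qform d2 Y (\<lambda>a. x (d1 + a)) (\<lambda>a. x (d1 + a))"
    by (subst double_sum_block_split) (auto simp: diag_sum_def qform_def)
  thus "0 \<le> (\<Sum>a<d1 + d2. \<Sum>b<d1 + d2. x a * diag_sum d1 X Y a b * x b)"
    using psd_qform_nonneg[OF X] psd_qform_nonneg[OF Y] by simp
qed

lemma trace_inner_diag_sum:
  "trace_inner (d1 + d2) (diag_sum d1 X Y) (diag_sum d1 X' Y')
     = trace_inner d1 X X' + trace_inner d2 Y Y'"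
  unfolding trace_inner_def by (subst double_sum_block_split) (auto simp: diag_sum_def)

lemma psd_zero_mat: "psd_mat k (\<lambda>_ _. 0)"
  unfolding psd_mat_def by simp

lemma trace_inner_zero: "trace_inner k (\<lambda>_ _. 0) Y = 0" "trace_inner k X (\<lambda>_ _. 0) = 0"
  unfolding trace_inner_def by simp_all

lemma block_factorization_direct_sum:
  assumes Q: "\<forall>i<p2. \<forall>j<q1. Q i j = 0"
    and P: "has_psd_factorization p1 q1 P d1" and R: "has_psd_factorization p2 q2 R d2"
  shows "has_psd_factorization (p1 + p2) (q1 + q2) (block_mat p1 q1 P Q R) (d1 + d2)"
proof -
  obtain AP BP where AP: "\<forall>i<p1. psd_mat d1 (AP i)" and BP: "\<forall>j<q1. psd_mat d1 (BP j)"
    and MP: "\<forall>i<p1. \<forall>j<q1. P i j = trace_inner d1 (AP i) (BP j)"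
    using P unfolding has_psd_factorization_def by blast
  obtain AR BR where AR: "\<forall>i<p2. psd_mat d2 (AR i)" and BR: "\<forall>j<q2. psd_mat d2 (BR j)"
    and MR: "\<forall>i<p2. \<forall>j<q2. R i j = trace_inner d2 (AR i) (BR j)"
    using R unfolding has_psd_factorization_def by blast
  define A where "A i = (if i < p1 then diag_sum d1 (AP i) (\<lambda>_ _. 0)
                                   else diag_sum d1 (\<lambda>_ _. 0) (AR (i - p1)))" for i
  define B where "B j = (if j < q1 then diag_sum d1 (BP j) (\<lambda>_ _. 0)
                                   else diag_sum d1 (\<lambda>_ _. 0) (BR (j - q1)))" for j
  have "\<forall>i<p1 + p2. psd_mat (d1 + d2) (A i)"
    using AP AR by (auto simp: A_def intro!: psd_diag_sum psd_zero_mat)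
  moreover have "\<forall>j<q1 + q2. psd_mat (d1 + d2) (B j)"
    using BP BR by (auto simp: B_def intro!: psd_diag_sum psd_zero_mat)
  moreover have "\<forall>i<p1 + p2. \<forall>j<q1 + q2. block_mat p1 q1 P Q R i j = trace_inner (d1 + d2) (A i) (B j)"
    using MP MR Q by (auto simp: A_def B_def block_mat_def trace_inner_diag_sum trace_inner_zero)
  ultimately show ?thesis unfolding has_psd_factorization_def by blast
qed

section \<open>The psd rank\<close>

lemma psd_diagonal:
  assumes "\<forall>a<k. 0 \<le> d a"
  shows "psd_mat k (\<lambda>a b. if a = b then d a else 0)"
  unfolding psd_mat_def
proof (intro conjI allI impI)
  fix x :: "nat \<Rightarrow> real"
  have "(\<Sum>b<k. x a * (if a = b then d a else 0) * x b) = (\<Sum>b<k. if a = b then d a * (x a * x a) else 0)"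
    for a by (rule sum.cong) auto
  hence "(\<Sum>a<k. \<Sum>b<k. x a * (if a = b then d a else 0) * x b) = (\<Sum>a<k. d a * (x a * x a))"
    by simp
  also have "\<dots> \<ge> 0" using assms by (intro sum_nonneg) simp
  finally show "0 \<le> (\<Sum>a<k. \<Sum>b<k. x a * (if a = b then d a else 0) * x b)" .
qed simp

lemma diagonal_factorization:
  assumes "nonneg_mat p q M"
  shows "has_psd_factorization p q M p"
  unfolding has_psd_factorization_def
proof (intro exI conjI)
  let ?A = "\<lambda>i a b. if a = b then (if a = i then 1 else 0) else (0::real)"
  let ?B = "\<lambda>j a b. if a = b then M a j else 0"
  show "\<forall>i<p. psd_mat p (?A i)" by (auto intro!: psd_diagonal)
  show "\<forall>j<q. psd_mat p (?B j)" using assms unfolding nonneg_mat_def by (auto intro!: psd_diagonal)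
  show "\<forall>i<p. \<forall>j<q. M i j = trace_inner p (?A i) (?B j)"
    by (simp add: trace_inner_def if_distrib[of "\<lambda>t. t * _"] cong: if_cong)
qed

text \<open>The psd rank is the least size of a factorization, and it is attained for nonnegative
  matrices because some factorization exists.\<close>
lemma psd_rank_le: "has_psd_factorization p q M k \<Longrightarrow> psd_rank p q M \<le> k"
  unfolding psd_rank_def by (rule Least_le)

lemma psd_rank_attained: "nonneg_mat p q M \<Longrightarrow> has_psd_factorization p q M (psd_rank p q M)"
  unfolding psd_rank_def by (rule LeastI[OF diagonal_factorization])

lemma block_mat_nonneg:
  assumes "nonneg_mat p1 q1 P" and "nonneg_mat p2 q1 Q" and "nonneg_mat p2 q2 R"
  shows "nonneg_mat (p1 + p2) (q1 + q2) (block_mat p1 q1 P Q R)"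
  using assms unfolding nonneg_mat_def block_mat_def by auto

theorem theorem2p7:
  fixes p1 p2 q1 q2 :: nat and P Q R :: "nat \<Rightarrow> nat \<Rightarrow> real"
  assumes "nonneg_mat p1 q1 P" and "nonneg_mat p2 q1 Q" and "nonneg_mat p2 q2 R"
  shows "psd_rank (p1 + p2) (q1 + q2) (block_mat p1 q1 P Q R)
           \<ge> psd_rank p1 q1 P + psd_rank p2 q2 R \<and>
         ((\<forall>i<p2. \<forall>j<q1. Q i j = 0) \<longrightarrow>
           psd_rank (p1 + p2) (q1 + q2) (block_mat p1 q1 P Q R)
             = psd_rank p1 q1 P + psd_rank p2 q2 R)"
proof -
  let ?M = "block_mat p1 q1 P Q R"
  obtain s t where "s + t = psd_rank (p1 + p2) (q1 + q2) ?M"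
    and "has_psd_factorization p1 q1 P s" "has_psd_factorization p2 q2 R t"
    using block_factorization_split[OF psd_rank_attained[OF block_mat_nonneg[OF assms]]] by blast
  hence lower: "psd_rank p1 q1 P + psd_rank p2 q2 R \<le> psd_rank (p1 + p2) (q1 + q2) ?M"
    using psd_rank_le add_mono by metis
  have "psd_rank (p1 + p2) (q1 + q2) ?M \<le> psd_rank p1 q1 P + psd_rank p2 q2 R"
    if "\<forall>i<p2. \<forall>j<q1. Q i j = 0"
    using block_factorization_direct_sum[OF that psd_rank_attained[OF assms(1)]
        psd_rank_attained[OF assms(3)]] by (rule psd_rank_le)
  thus ?thesis using lower by auto
qed

end
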